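(* Let $G$ be a strongly connected weighted digraph and consider a finite number of tokens initially located at some of its nodes. Suppose that, at each iteration, each node that possesses a token passes it to one of its out-neighbors via an out-edge of minimum weight (among its out-edges) and adds a positive constant to the weight of that edge. Then after a finite number of iterations every node has been visited by (i.e., has held) at least one token.
   Context: A weighted digraph $G=(V,E,A)$ has finite vertex set $V$, edge set $E\subseteq V\times V$, and positive weights $a_{ij}$ on the edges $(v_i,v_j)\in E$. It is strongly connected if there is a directed path between every ordered pair of distinct vertices. An out-neighbor of $v$ is a vertex $w$ with $(v,w)\in E$. *)

theory Defs
  imports Complex_Main
begin

definition weighted_digraph :: "'v set \<Rightarrow> ('v \<times> 'v) set \<Rightarrow> ('v \<times> 'v \<Rightarrow> real) \<Rightarrow> bool" where
  "weighted_digraph V E a \<longleftrightarrow> finite V \<and> E \<subseteq> V \<times> V \<and> (\<forall>e\<in>E. a e > 0)"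

definition strongly_connected :: "'v set \<Rightarrow> ('v \<times> 'v) set \<Rightarrow> bool" where
  "strongly_connected V E \<longleftrightarrow> (\<forall>u\<in>V. \<forall>v\<in>V. u \<noteq> v \<longrightarrow> (u, v) \<in> E\<^sup>+)"

definition min_out_neighbor :: "('v \<times> 'v) set \<Rightarrow> ('v \<times> 'v \<Rightarrow> real) \<Rightarrow> 'v \<Rightarrow> 'v \<Rightarrow> bool" where
  "min_out_neighbor E w v u \<longleftrightarrow> (v, u) \<in> E \<and> (\<forall>u'. (v, u') \<in> E \<longrightarrow> w (v, u) \<le> w (v, u'))"

text \<open>K: the (finite) set of tokens; pos t k: the node
  holding token k after t iterations; w t: the edge weights after t iterations
  (w 0 = a); nxt t v: the out-neighbour to which node v passes its token(s) at
  iteration t (any minimum-weight out-edge; ties broken arbitrarily); delta: the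
  positive constant added to the weight of each used edge.\<close>

definition token_run ::
  "('v \<times> 'v) set \<Rightarrow> ('v \<times> 'v \<Rightarrow> real) \<Rightarrow> real \<Rightarrow> 'k set \<Rightarrow>
   (nat \<Rightarrow> 'k \<Rightarrow> 'v) \<Rightarrow> (nat \<Rightarrow> 'v \<times> 'v \<Rightarrow> real) \<Rightarrow> (nat \<Rightarrow> 'v \<Rightarrow> 'v) \<Rightarrow> bool" where
  "token_run E a delta K pos w nxt \<longleftrightarrow>
     w 0 = a \<and>
     (\<forall>t. \<forall>v \<in> pos t ` K. min_out_neighbor E (w t) v (nxt t v)) \<and>
     (\<forall>t. \<forall>k \<in> K. pos (Suc t) k = nxt t (pos t k)) \<and>
     (\<forall>t e. w (Suc t) e =
        (if \<exists>v \<in> pos t ` K. e = (v, nxt t v) then w t e + delta else w t e))"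

end

theory Submission
  imports Defs "HOL-Library.Infinite_Set"
begin

text \<open>Since there are finitely many nodes, some node v holds a token infinitely often.
  Then every out-edge (v, u) is used infinitely often: otherwise its weight is frozen
  at some value c from a time T on, every later visit of v uses an edge of weight at
  most c and raises it by \<delta>, so the potential \<Sum>u'. min (w (v, u')) (c + \<delta>) over
  the out-edges of v would increase by \<delta> infinitely often while staying bounded.
  Hence u also holds a token infinitely often, and by strong connectivity so does
  every node.\<close>

lemma incseq_bounded_not_frequently_jumps:
  fixes P :: "nat \<Rightarrow> real"
  assumes "incseq P" and "\<And>t. P t \<le> B" and "\<delta> > 0"
  shows "\<not> (\<exists>\<^sub>\<infinity>t. P t + \<delta> \<le> P (Suc t))"
proof -
  obtain L where "P \<longlonglongrightarrow> L"
    using incseq_convergent[of P B] assms(1,2) by blast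
  then have "(\<lambda>t. P (Suc t) - P t) \<longlonglongrightarrow> L - L"
    by (intro tendsto_diff LIMSEQ_Suc)
  then have "\<forall>\<^sub>F t in sequentially. P (Suc t) - P t < \<delta>"
    using assms(3) by (simp add: order_tendstoD(2))
  then have "\<forall>\<^sub>F t in sequentially. \<not> P t + \<delta> \<le> P (Suc t)"
    by (rule eventually_mono) simp
  then show ?thesis
    by (simp add: cofinite_eq_sequentially not_frequently)
qed

lemma sum_min_cap_increase:
  fixes f g :: "'a \<Rightarrow> real"
  assumes "finite A" and "x \<in> A" and "\<And>y. y \<in> A \<Longrightarrow> f y \<le> g y"
    and "f x \<le> c" and "g x = f x + \<delta>" and "\<delta> \<ge> 0"
  shows "(\<Sum>y\<in>A. min (f y) (c + \<delta>)) + \<delta> \<le> (\<Sum>y\<in>A. min (g y) (c + \<delta>))"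
proof -
  have "(\<Sum>y\<in>A - {x}. min (f y) (c + \<delta>)) \<le> (\<Sum>y\<in>A - {x}. min (g y) (c + \<delta>))"
    using assms(3) by (intro sum_mono min.mono) auto
  moreover have "min (g x) (c + \<delta>) = min (f x) (c + \<delta>) + \<delta>"
    using assms(4-6) by simp
  ultimately show ?thesis
    by (simp add: sum.remove[OF assms(1,2)])
qed

lemma frequently_eq_finite_range:
  fixes f :: "nat \<Rightarrow> 'a"
  assumes "finite A" and "\<And>t. f t \<in> A"
  shows "\<exists>x\<in>A. \<exists>\<^sub>\<infinity>t. f t = x"
proof -
  have "\<exists>\<^sub>\<infinity>t. \<exists>x\<in>A. f t = x"
    using assms(2) by (intro MOST_INFM ALL_MOST) auto
  then show ?thesis
    by (simp only: INFM_finite_Bex_distrib[OF assms(1)])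
qed

lemma finite_common_time_bound:
  assumes "finite A" and "\<forall>x\<in>A. \<exists>n::nat. P x n"
  shows "\<exists>N. \<forall>x\<in>A. \<exists>n\<le>N. P x n"
proof -
  obtain f where f: "\<forall>x\<in>A. P x (f x)"
    using bchoice[OF assms(2)] by blast
  have "\<forall>x\<in>A. f x \<le> Max (f ` A)"
    using assms(1) by simp
  with f show ?thesis by blast
qed

locale token_process =
  fixes V :: "'v set" and E :: "('v \<times> 'v) set" and a :: "'v \<times> 'v \<Rightarrow> real"
    and delta :: real and K :: "'k set"
    and pos :: "nat \<Rightarrow> 'k \<Rightarrow> 'v" and w :: "nat \<Rightarrow> 'v \<times> 'v \<Rightarrow> real"
    and nxt :: "nat \<Rightarrow> 'v \<Rightarrow> 'v"
  assumes digraph: "weighted_digraph V E a"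
    and delta_pos: "delta > 0"
    and tokens_nonempty: "K \<noteq> {}"
    and initial_pos: "\<forall>k\<in>K. pos 0 k \<in> V"
    and run: "token_run E a delta K pos w nxt"
begin

abbreviation occupied :: "nat \<Rightarrow> 'v set" where
  "occupied t \<equiv> pos t ` K"

lemma min_out_neighbor_nxt: "v \<in> occupied t \<Longrightarrow> min_out_neighbor E (w t) v (nxt t v)"
  using run unfolding token_run_def by blast

lemma pos_Suc: "k \<in> K \<Longrightarrow> pos (Suc t) k = nxt t (pos t k)"
  using run unfolding token_run_def by blast

lemma w_Suc:
  "w (Suc t) (v, u) = (if v \<in> occupied t \<and> nxt t v = u then w t (v, u) + delta else w t (v, u))"
  using run unfolding token_run_def by auto

lemma finite_V: "finite V"
  using digraph unfolding weighted_digraph_def by blast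

lemma occupied_subset: "occupied t \<subseteq> V"
proof (induction t)
  case 0
  then show ?case using initial_pos by blast
next
  case (Suc t)
  have "(v, nxt t v) \<in> E" if "v \<in> occupied t" for v
    using min_out_neighbor_nxt[OF that] unfolding min_out_neighbor_def by blast
  then show ?case
    using digraph unfolding weighted_digraph_def by (auto simp: pos_Suc)
qed

lemma nxt_occupied_Suc: "v \<in> occupied t \<Longrightarrow> nxt t v \<in> occupied (Suc t)"
  by (auto simp: pos_Suc)

lemma incseq_weight: "incseq (\<lambda>t. w t e)"
  by (rule incseq_SucI) (use delta_pos in \<open>cases e, simp add: w_Suc\<close>)

lemma frequently_occupied_node: "\<exists>v\<in>V. \<exists>\<^sub>\<infinity>t. v \<in> occupied t"
proof -
  obtain k where "k \<in> K"
    using tokens_nonempty by blast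
  then have "\<And>t. pos t k \<in> V"
    using occupied_subset by blast
  then obtain v where "v \<in> V" and often: "\<exists>\<^sub>\<infinity>t. pos t k = v"
    using frequently_eq_finite_range[OF finite_V, of "\<lambda>t. pos t k"] by blast
  from often have "\<exists>\<^sub>\<infinity>t. v \<in> occupied t"
    by (rule INFM_mono) (use \<open>k \<in> K\<close> in blast)
  with \<open>v \<in> V\<close> show ?thesis ..
qed

lemma frequently_uses_out_edge:
  assumes often: "\<exists>\<^sub>\<infinity>t. v \<in> occupied t" and edge: "(v, u) \<in> E"
  shows "\<exists>\<^sub>\<infinity>t. v \<in> occupied t \<and> nxt t v = u"
proof (rule ccontr)
  assume "\<not> ?thesis"
  then obtain T where unused: "\<And>t. t \<ge> T \<Longrightarrow> \<not> (v \<in> occupied t \<and> nxt t v = u)"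
    by (auto simp: MOST_nat_le)
  define c where "c = w T (v, u)"
  have frozen: "w t (v, u) = c" if "t \<ge> T" for t
    using that
  proof (induction t rule: dec_induct)
    case (step t)
    then show ?case using unused[of t] by (auto simp: w_Suc)
  qed (simp add: c_def)
  define Out where "Out = {u'. (v, u') \<in> E}"
  have "finite Out"
    using digraph finite_V unfolding weighted_digraph_def Out_def
    by (auto intro: finite_subset[of _ V])
  define P where "P t = (\<Sum>u'\<in>Out. min (w t (v, u')) (c + delta))" for t
  have "incseq P"
    using incseq_weight unfolding P_def incseq_def by (auto intro!: sum_mono min.mono)
  moreover have "P t \<le> real (card Out) * (c + delta)" for t
    using sum_mono[of Out "\<lambda>u'. min (w t (v, u')) (c + delta)" "\<lambda>_. c + delta"]
    unfolding P_def by simp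
  moreover have jump: "P t + delta \<le> P (Suc t)" if "t \<ge> T" and "v \<in> occupied t" for t
  proof -
    have "min_out_neighbor E (w t) v (nxt t v)"
      using min_out_neighbor_nxt[OF that(2)] .
    then have "nxt t v \<in> Out" and "w t (v, nxt t v) \<le> c"
      using edge frozen[OF that(1)] unfolding min_out_neighbor_def Out_def by auto
    then show ?thesis
      unfolding P_def using \<open>finite Out\<close> that(2) delta_pos
      by (intro sum_min_cap_increase) (auto simp: w_Suc incseq_SucD[OF incseq_weight])
  qed
  moreover have "\<exists>\<^sub>\<infinity>t. P t + delta \<le> P (Suc t)"
    using INFM_conjI[OF often MOST_ge_nat[of T]] by (rule INFM_mono) (simp add: jump)
  ultimately show False
    using incseq_bounded_not_frequently_jumps delta_pos by blast
qed

lemma frequently_occupied_successor: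
  assumes "\<exists>\<^sub>\<infinity>t. v \<in> occupied t" and "(v, u) \<in> E"
  shows "\<exists>\<^sub>\<infinity>t. u \<in> occupied t"
proof -
  have "\<exists>\<^sub>\<infinity>t. u \<in> occupied (Suc t)"
    using frequently_uses_out_edge[OF assms] by (rule INFM_mono) (metis nxt_occupied_Suc)
  then show ?thesis
    using INFM_inj[of "\<lambda>t. u \<in> occupied t" Suc] by simp
qed

lemma frequently_occupied_trancl:
  assumes "(v, u) \<in> E\<^sup>+" and "\<exists>\<^sub>\<infinity>t. v \<in> occupied t"
  shows "\<exists>\<^sub>\<infinity>t. u \<in> occupied t"
  using assms by induction (auto intro: frequently_occupied_successor)

end

theorem lemma4p3:
  fixes V :: "'v set" and E :: "('v \<times> 'v) set" and a :: "'v \<times> 'v \<Rightarrow> real"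
    and delta :: real and K :: "'k set"
    and pos :: "nat \<Rightarrow> 'k \<Rightarrow> 'v" and w :: "nat \<Rightarrow> 'v \<times> 'v \<Rightarrow> real"
    and nxt :: "nat \<Rightarrow> 'v \<Rightarrow> 'v"
  assumes "weighted_digraph V E a"
    and "strongly_connected V E"
    and "delta > 0"
    and "finite K" and "K \<noteq> {}"
    and "\<forall>k\<in>K. pos 0 k \<in> V"
    and "token_run E a delta K pos w nxt"
  shows "\<exists>N. \<forall>v\<in>V. \<exists>t\<le>N. \<exists>k\<in>K. pos t k = v"
proof -
  interpret token_process V E a delta K pos w nxt
    using assms by unfold_locales
  obtain v0 where "v0 \<in> V" and often_v0: "\<exists>\<^sub>\<infinity>t. v0 \<in> occupied t"
    using frequently_occupied_node by blast
  have often: "\<exists>\<^sub>\<infinity>t. v \<in> occupied t" if "v \<in> V" for v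
  proof (cases "v = v0")
    case False
    then have "(v0, v) \<in> E\<^sup>+"
      using assms(2) \<open>v0 \<in> V\<close> \<open>v \<in> V\<close> unfolding strongly_connected_def by metis
    then show ?thesis
      using often_v0 by (rule frequently_occupied_trancl)
  qed (use often_v0 in simp)
  have "\<forall>v\<in>V. \<exists>t. \<exists>k\<in>K. pos t k = v"
  proof
    fix v assume "v \<in> V"
    obtain t where "v \<in> occupied t"
      using INFM_EX[OF often[OF \<open>v \<in> V\<close>]] ..
    then show "\<exists>t. \<exists>k\<in>K. pos t k = v" by auto
  qed
  then show ?thesis
    by (rule finite_common_time_bound[OF finite_V])
qed

end
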